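(* Let $n=Hc$ i.i.d. samples be drawn from the uniform distribution on $[0,1]$, with order statistics $y_{(1,n)}\le\dots\le y_{(n,n)}$. For $H,c$ sufficiently large and $k=1,\dots,H-1$: (i) there is a constant $C>0$ such that for any $\epsilon>\frac1{Hc-1}$, $\mathbb{P}\big(y_{(kc,Hc)}>\frac kH+\epsilon\big)\le CH\sqrt{Hc+1}\exp\big(-(Hc+1)\frac{\epsilon^2}2\big)$; (ii) there is a constant $C>0$ such that for any $\epsilon>\frac2{Hc-1}$, $\mathbb{P}\big(y_{(kc,Hc)}<\frac kH-\epsilon\big)\le CH\sqrt{Hc+1}\exp\big(-(Hc+1)\frac{\epsilon^2}8\big)$; (iii) let $\delta(k,H,c)=|y_{((k-1)c,Hc)}-y_{(kc,Hc)}|$ for $2\le k\le H-1$, $\delta(1,H,c)=|y_{(c,Hc)}|$ and $\delta(H,H,c)=|1-y_{((H-1)c,Hc)}|$; there is a constant $C>0$ such that for any $\epsilon>\frac4{Hc-1}$ and any $1\le k\le H$, $\mathbb{P}\big(|\delta(k,H,c)-\frac1H|>\epsilon\big)\le CH\sqrt{Hc+1}\exp\big(-(Hc+1)\frac{\epsilon^2}{32}\big)$.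
   Context: $y_{(i,n)}$ denotes the $i$-th smallest of $n$ samples. *)

theory Defs
  imports "HOL-Probability.Probability"
begin

definition unif_sample :: "nat \<Rightarrow> (nat \<Rightarrow> real) measure" where
  "unif_sample n = PiM {..<n} (\<lambda>_. uniform_measure lborel {0..1::real})"

text \<open>Order statistic y_(i,n): the i-th smallest (1-based) of the n samples x 0, ..., x (n-1).\<close>
definition ord_stat :: "nat \<Rightarrow> nat \<Rightarrow> (nat \<Rightarrow> real) \<Rightarrow> real" where
  "ord_stat i n x = sort (map x [0..<n]) ! (i - 1)"

definition spacing :: "nat \<Rightarrow> nat \<Rightarrow> nat \<Rightarrow> (nat \<Rightarrow> real) \<Rightarrow> real" where
  "spacing k H c x =
     (if k = 1 then \<bar>ord_stat c (H*c) x\<bar>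
      else if k = H then \<bar>1 - ord_stat ((H-1)*c) (H*c) x\<bar>
      else \<bar>ord_stat ((k-1)*c) (H*c) x - ord_stat (k*c) (H*c) x\<bar>)"

end

theory Submission
  imports Defs
begin

text \<open>The m-th order statistic of n samples exceeds t exactly when fewer than m samples
  lie in (-\<infinity>, t], and is below s exactly when at least m samples lie in (-\<infinity>, s).
  Both counts are sums of n independent indicators, so Hoeffding's inequality bounds each
  tail of y_(kc,Hc) around k/H by exp(-2 H c \<epsilon>^2), which is stronger than the claimed bounds;
  the thresholds on \<epsilon> in the statement are only needed to make \<epsilon> positive. A spacing
  deviates from 1/H by more than \<epsilon> only if one of its two endpoints deviates from its
  mean by more than \<epsilon>/2, which costs a union bound over two such tails.\<close>

abbreviation unif01 :: "real measure" where
  "unif01 \<equiv> uniform_measure lborel {0..1}"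

lemma prob_space_unif01: "prob_space unif01"
  by (rule prob_space_uniform_measure) auto

lemma prob_space_unif_sample: "prob_space (unif_sample n)"
  unfolding unif_sample_def by (rule prob_space_PiM) (rule prob_space_unif01)

lemma distr_unif_sample_coord: "i < n \<Longrightarrow> distr (unif_sample n) unif01 (\<lambda>x. x i) = unif01"
  unfolding unif_sample_def by (rule distr_PiM_component) (auto intro: prob_space_unif01)

lemma indep_vars_unif_sample:
  assumes "n > 0"
  shows "prob_space.indep_vars (unif_sample n) (\<lambda>_. unif01) (\<lambda>i x. x i) {..<n}"
proof -
  interpret prob_space "unif_sample n" by (rule prob_space_unif_sample)
  have "distr (unif_sample n) (unif_sample n) (\<lambda>x. \<lambda>i\<in>{..<n}. x i) = distr (unif_sample n) (unif_sample n) (\<lambda>x. x)"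
    by (rule distr_cong) (auto simp: unif_sample_def space_PiM PiE_def extensional_def restrict_def)
  then have "distr (unif_sample n) (\<Pi>\<^sub>M i\<in>{..<n}. unif01) (\<lambda>x. \<lambda>i\<in>{..<n}. x i) = (\<Pi>\<^sub>M i\<in>{..<n}. unif01)"
    by (simp add: unif_sample_def)
  moreover have "(\<Pi>\<^sub>M i\<in>{..<n}. distr (unif_sample n) unif01 (\<lambda>x. x i)) = (\<Pi>\<^sub>M i\<in>{..<n}. unif01)"
    by (rule PiM_cong) (auto simp: distr_unif_sample_coord)
  ultimately show ?thesis
    using assms by (subst indep_vars_iff_distr_eq_PiM') (auto simp: unif_sample_def)
qed

lemma AE_unif_sample_unit_interval: "AE x in unif_sample n. \<forall>i<n. x i \<in> {0..1}"
proof -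
  have "AE x in unif_sample n. x i \<in> {0..1}" if "i < n" for i
    unfolding unif_sample_def using that
    by (intro AE_PiM_component) (auto intro: prob_space_unif01 AE_uniform_measureI)
  then have "AE x in unif_sample n. \<forall>i\<in>{..<n}. x i \<in> {0..1}"
    by (subst AE_finite_all) auto
  then show ?thesis by (rule eventually_mono) auto
qed

lemma expectation_indicator_unif_sample:
  assumes "i < n" "S \<in> sets borel"
  shows "prob_space.expectation (unif_sample n) (\<lambda>x. indicator S (x i) :: real)
           = measure lborel ({0..1} \<inter> S)"
proof -
  have "prob_space.expectation (unif_sample n) (\<lambda>x. indicator S (x i) :: real)
      = integral\<^sup>L (distr (unif_sample n) unif01 (\<lambda>x. x i)) (indicator S)"
    using assms by (intro integral_distr[symmetric]) (auto simp: unif_sample_def)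
  also have "\<dots> = measure unif01 S"
    using assms by (simp add: distr_unif_sample_coord)
  finally show ?thesis using assms(2) by simp
qed

lemma sum_indicator_eq_card:
  "finite I \<Longrightarrow> (\<Sum>i\<in>I. indicator S (x i) :: real) = real (card {i\<in>I. x i \<in> S})"
  unfolding indicator_def by (simp add: sum.If_cases Int_def conj_commute)

lemma borel_measurable_count_unif_sample [measurable]:
  assumes "S \<in> sets borel"
  shows "(\<lambda>x. real (card {i\<in>{..<n}. x i \<in> S})) \<in> borel_measurable (unif_sample n)"
proof -
  have "(\<lambda>x. real (card {i\<in>{..<n}. x i \<in> S})) = (\<lambda>x. \<Sum>i\<in>{..<n}. indicator S (x i))"
    by (simp add: sum_indicator_eq_card)
  also have "\<dots> \<in> borel_measurable (unif_sample n)"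
    unfolding unif_sample_def using assms by measurable
  finally show ?thesis .
qed

lemma Hoeffding_ineq_indicator_unif_sample:
  assumes "n > 0" "S \<in> sets borel"
  shows "Hoeffding_ineq (unif_sample n) {..<n}
           (\<lambda>i x. indicator S (x i)) (\<lambda>_. 0) (\<lambda>_. 1)"
proof -
  interpret prob_space "unif_sample n" by (rule prob_space_unif_sample)
  show ?thesis
    unfolding Hoeffding_ineq_def
  proof
    show "indep_vars (\<lambda>_. borel) (\<lambda>i x. indicator S (x i)) {..<n}"
      by (rule indep_vars_compose2[OF indep_vars_unif_sample[OF assms(1)]]) (use assms in auto)
  qed auto
qed

lemma sum_expectation_indicator_unif_sample:
  assumes "S \<in> sets borel"
  shows "(\<Sum>i\<in>{..<n}. prob_space.expectation (unif_sample n) (\<lambda>x. indicator S (x i) :: real))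
           = real n * measure lborel ({0..1} \<inter> S)"
  by (simp add: expectation_indicator_unif_sample assms)

lemma count_lower_tail_unif_sample:
  assumes "n > 0" "S \<in> sets borel" "\<delta> \<ge> 0"
  shows "measure (unif_sample n)
           {x\<in>space (unif_sample n). real (card {i\<in>{..<n}. x i \<in> S}) \<le> real n * measure lborel ({0..1} \<inter> S) - \<delta>}
         \<le> exp (- 2 * \<delta>\<^sup>2 / real n)"
  using Hoeffding_ineq.Hoeffding_ineq_le[OF Hoeffding_ineq_indicator_unif_sample[OF assms(1,2)] assms(3)] assms(1)
  by (simp only: sum_indicator_eq_card[OF finite_lessThan] sum_expectation_indicator_unif_sample[OF assms(2)]) simp

lemma count_upper_tail_unif_sample:
  assumes "n > 0" "S \<in> sets borel" "\<delta> \<ge> 0"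
  shows "measure (unif_sample n)
           {x\<in>space (unif_sample n). real (card {i\<in>{..<n}. x i \<in> S}) \<ge> real n * measure lborel ({0..1} \<inter> S) + \<delta>}
         \<le> exp (- 2 * \<delta>\<^sup>2 / real n)"
  using Hoeffding_ineq.Hoeffding_ineq_ge[OF Hoeffding_ineq_indicator_unif_sample[OF assms(1,2)] assms(3)] assms(1)
  by (simp only: sum_indicator_eq_card[OF finite_lessThan] sum_expectation_indicator_unif_sample[OF assms(2)]) simp

lemma sorted_filter_eq_takeWhile:
  assumes "sorted ys" "\<And>y z. P y \<Longrightarrow> z \<le> y \<Longrightarrow> P z"
  shows "filter P ys = takeWhile P ys"
  using assms
proof (induction ys)
  case (Cons a ys)
  have "filter P ys = []" if "\<not> P a"
    using Cons.prems that by (auto simp: filter_empty_conv)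
  with Cons show ?case by auto
qed simp

lemma sorted_nth_iff_less_length_filter:
  assumes "sorted ys" "j < length ys" and down: "\<And>y z. P y \<Longrightarrow> z \<le> y \<Longrightarrow> P z"
  shows "P (ys ! j) \<longleftrightarrow> j < length (filter P ys)"
proof -
  have "P (ys ! j) \<longleftrightarrow> Suc j \<le> length (takeWhile P ys)"
  proof
    assume "P (ys ! j)"
    then have "P (ys ! i)" if "i < Suc j" for i
      using down sorted_nth_mono[OF assms(1), of i j] that assms(2) by auto
    then show "Suc j \<le> length (takeWhile P ys)"
      using assms(2) by (intro length_takeWhile_less_P_nth) auto
  next
    assume "Suc j \<le> length (takeWhile P ys)"
    then show "P (ys ! j)"
      by (metis Suc_le_eq nth_mem set_takeWhileD takeWhile_nth)
  qed
  then show ?thesis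
    using sorted_filter_eq_takeWhile[of ys P, OF assms(1) down] by (simp add: Suc_le_eq)
qed

lemma length_filter_sort_map_upt:
  "length (filter P (sort (map x [0..<n]))) = card {i\<in>{..<n}. P (x i)}"
proof -
  have "length (filter P (sort (map x [0..<n]))) = length (filter P (map x [0..<n]))"
    by (metis mset_filter mset_sort size_mset)
  also have "\<dots> = card {i\<in>{..<n}. P (x i)}"
    by (auto simp: length_filter_conv_card intro!: arg_cong[where f = card])
  finally show ?thesis .
qed

lemma ord_stat_iff_card:
  assumes "1 \<le> m" "m \<le> n" "\<And>y z. P y \<Longrightarrow> z \<le> y \<Longrightarrow> P z"
  shows "P (ord_stat m n x) \<longleftrightarrow> m \<le> card {i\<in>{..<n}. P (x i)}"
  using sorted_nth_iff_less_length_filter[of "sort (map x [0..<n])" "m - 1" P] assms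
  by (auto simp: ord_stat_def length_filter_sort_map_upt)

lemma ord_stat_le_iff:
  "1 \<le> m \<Longrightarrow> m \<le> n \<Longrightarrow> ord_stat m n x \<le> t \<longleftrightarrow> m \<le> card {i\<in>{..<n}. x i \<in> {..t}}"
  by (subst ord_stat_iff_card[where P = "\<lambda>y. y \<le> t"]) auto

lemma ord_stat_less_iff:
  "1 \<le> m \<Longrightarrow> m \<le> n \<Longrightarrow> ord_stat m n x < s \<longleftrightarrow> m \<le> card {i\<in>{..<n}. x i \<in> {..<s}}"
  by (subst ord_stat_iff_card[where P = "\<lambda>y. y < s"]) auto

lemma borel_measurable_ord_stat [measurable]:
  assumes "1 \<le> m" "m \<le> n"
  shows "ord_stat m n \<in> borel_measurable (unif_sample n)"
proof (subst borel_measurable_iff_le, intro allI)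
  fix t
  have "{x\<in>space (unif_sample n). ord_stat m n x \<le> t}
      = {x\<in>space (unif_sample n). real m \<le> real (card {i\<in>{..<n}. x i \<in> {..t}})}"
    using ord_stat_le_iff[OF assms] by auto
  also have "\<dots> \<in> sets (unif_sample n)" by measurable
  finally show "{x\<in>space (unif_sample n). ord_stat m n x \<le> t} \<in> sets (unif_sample n)" .
qed

lemma ord_stat_upper_tail:
  assumes "1 \<le> m" "m \<le> n" "\<delta> \<ge> 0" "real m + \<delta> \<le> real n * t"
  shows "measure (unif_sample n) {x\<in>space (unif_sample n). ord_stat m n x > t} \<le> exp (- 2 * \<delta>\<^sup>2 / real n)"
proof (cases "t < 1")
  case True
  interpret prob_space "unif_sample n" by (rule prob_space_unif_sample)
  have "0 < real n * t" using assms by linarith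
  then have "t \<ge> 0" by (simp add: zero_less_mult_iff)
  with True have p: "measure lborel ({0..1} \<inter> {..t}) = t"
    by (simp add: Int_atLeastAtMost)
  have "{x\<in>space (unif_sample n). ord_stat m n x > t}
      \<subseteq> {x\<in>space (unif_sample n). real (card {i\<in>{..<n}. x i \<in> {..t}}) \<le> real n * t - \<delta>}"
  proof safe
    fix x :: "nat \<Rightarrow> real" assume "ord_stat m n x > t"
    then have "real (card {i\<in>{..<n}. x i \<in> {..t}}) \<le> real m"
      using ord_stat_le_iff[OF assms(1,2), of x t] by simp
    then show "real (card {i\<in>{..<n}. x i \<in> {..t}}) \<le> real n * t - \<delta>"
      using assms(4) by linarith
  qed
  then have "measure (unif_sample n) {x\<in>space (unif_sample n). ord_stat m n x > t}
      \<le> measure (unif_sample n) {x\<in>space (unif_sample n). real (card {i\<in>{..<n}. x i \<in> {..t}}) \<le> real n * t - \<delta>}"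
    by (rule finite_measure_mono) measurable
  also have "\<dots> \<le> exp (- 2 * \<delta>\<^sup>2 / real n)"
    using count_lower_tail_unif_sample[of n "{..t}" \<delta>, unfolded p] assms(1,2,3) by simp
  finally show ?thesis .
next
  case False
  have "AE x in unif_sample n. \<not> ord_stat m n x > t"
    using AE_unif_sample_unit_interval
  proof (rule eventually_mono)
    fix x :: "nat \<Rightarrow> real" assume "\<forall>i<n. x i \<in> {0..1}"
    with False have "{i\<in>{..<n}. x i \<in> {..t}} = {..<n}" by auto
    then have "card {i\<in>{..<n}. x i \<in> {..t}} = n" by simp
    then show "\<not> ord_stat m n x > t"
      using ord_stat_le_iff[OF assms(1,2), of x t] assms(2) by simp
  qed
  then show ?thesis
    by (simp add: prob_space.prob_eq_0_AE[OF prob_space_unif_sample])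
qed

lemma ord_stat_lower_tail:
  assumes "1 \<le> m" "m \<le> n" "\<delta> \<ge> 0" "real n * s + \<delta> \<le> real m"
  shows "measure (unif_sample n) {x\<in>space (unif_sample n). ord_stat m n x < s} \<le> exp (- 2 * \<delta>\<^sup>2 / real n)"
proof (cases "s > 0")
  case True
  interpret prob_space "unif_sample n" by (rule prob_space_unif_sample)
  have "real m \<le> real n" "real n > 0" using assms(1,2) by auto
  then have "real n * s \<le> real n * 1" "real n > 0" using assms(3,4) by linarith+
  then have "s \<le> 1" by (rule mult_left_le_imp_le)
  then have "{0..1} \<inter> {..<s} = {0..<s}" by auto
  with True have p: "measure lborel ({0..1} \<inter> {..<s}) = s" by simp
  have "{x\<in>space (unif_sample n). ord_stat m n x < s}
      \<subseteq> {x\<in>space (unif_sample n). real (card {i\<in>{..<n}. x i \<in> {..<s}}) \<ge> real n * s + \<delta>}"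
  proof safe
    fix x :: "nat \<Rightarrow> real" assume "ord_stat m n x < s"
    then have "real m \<le> real (card {i\<in>{..<n}. x i \<in> {..<s}})"
      using ord_stat_less_iff[OF assms(1,2), of x s] by simp
    then show "real (card {i\<in>{..<n}. x i \<in> {..<s}}) \<ge> real n * s + \<delta>"
      using assms(4) by linarith
  qed
  then have "measure (unif_sample n) {x\<in>space (unif_sample n). ord_stat m n x < s}
      \<le> measure (unif_sample n) {x\<in>space (unif_sample n). real (card {i\<in>{..<n}. x i \<in> {..<s}}) \<ge> real n * s + \<delta>}"
    by (rule finite_measure_mono) measurable
  also have "\<dots> \<le> exp (- 2 * \<delta>\<^sup>2 / real n)"
    using count_upper_tail_unif_sample[of n "{..<s}" \<delta>, unfolded p] assms(1,2,3) by simp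
  finally show ?thesis .
next
  case False
  have "AE x in unif_sample n. \<not> ord_stat m n x < s"
    using AE_unif_sample_unit_interval
  proof (rule eventually_mono)
    fix x :: "nat \<Rightarrow> real" assume "\<forall>i<n. x i \<in> {0..1}"
    with False have empty: "{i\<in>{..<n}. x i \<in> {..<s}} = {}" by fastforce
    show "\<not> ord_stat m n x < s"
      using ord_stat_less_iff[OF assms(1,2), of x s] assms(1) unfolding empty by simp
  qed
  then show ?thesis
    by (simp add: prob_space.prob_eq_0_AE[OF prob_space_unif_sample])
qed

lemma ord_stat_block_upper_tail:
  assumes "1 \<le> j" "j \<le> H" "1 \<le> c" "\<epsilon> \<ge> 0"
  shows "measure (unif_sample (H*c))
           {x\<in>space (unif_sample (H*c)). ord_stat (j*c) (H*c) x > real j / real H + \<epsilon>}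
         \<le> exp (- 2 * real (H*c) * \<epsilon>\<^sup>2)"
proof -
  have "real (j*c) + real (H*c) * \<epsilon> = real (H*c) * (real j / real H + \<epsilon>)"
    using assms by (simp add: field_simps)
  moreover have "- 2 * (real (H*c) * \<epsilon>)\<^sup>2 / real (H*c) = - 2 * real (H*c) * \<epsilon>\<^sup>2"
    using assms by (simp add: power2_eq_square)
  ultimately show ?thesis
    using ord_stat_upper_tail[of "j*c" "H*c" "real (H*c) * \<epsilon>" "real j / real H + \<epsilon>"] assms by simp
qed

lemma ord_stat_block_lower_tail:
  assumes "1 \<le> j" "j \<le> H" "1 \<le> c" "\<epsilon> \<ge> 0"
  shows "measure (unif_sample (H*c))
           {x\<in>space (unif_sample (H*c)). ord_stat (j*c) (H*c) x < real j / real H - \<epsilon>}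
         \<le> exp (- 2 * real (H*c) * \<epsilon>\<^sup>2)"
proof -
  have "real (H*c) * (real j / real H - \<epsilon>) + real (H*c) * \<epsilon> = real (j*c)"
    using assms by (simp add: field_simps)
  moreover have "- 2 * (real (H*c) * \<epsilon>)\<^sup>2 / real (H*c) = - 2 * real (H*c) * \<epsilon>\<^sup>2"
    using assms by (simp add: power2_eq_square)
  ultimately show ?thesis
    using ord_stat_lower_tail[of "j*c" "H*c" "real (H*c) * \<epsilon>" "real j / real H - \<epsilon>"] assms by simp
qed

text \<open>The boundary cases of \<open>spacing\<close> use 0 and 1 in place of y_(0,Hc) and y_(Hc,Hc).\<close>

definition block_endpoint :: "nat \<Rightarrow> nat \<Rightarrow> nat \<Rightarrow> (nat \<Rightarrow> real) \<Rightarrow> real" where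
  "block_endpoint j H c x = (if j = 0 then 0 else if j = H then 1 else ord_stat (j*c) (H*c) x)"

lemma borel_measurable_block_endpoint [measurable]:
  assumes "j \<le> H" "1 \<le> c"
  shows "block_endpoint j H c \<in> borel_measurable (unif_sample (H*c))"
proof (cases "j = 0 \<or> j = H")
  case False
  then have "ord_stat (j*c) (H*c) \<in> borel_measurable (unif_sample (H*c))"
    using assms by (intro borel_measurable_ord_stat) auto
  with False show ?thesis
    by (simp add: block_endpoint_def[abs_def])
next
  case True
  then have "block_endpoint j H c = (\<lambda>_. if j = 0 then 0 else 1)"
    by (auto simp: block_endpoint_def)
  then show ?thesis by simp
qed

lemma block_endpoint_deviation:
  assumes "j \<le> H" "1 \<le> c" "\<epsilon> \<ge> 0"
  shows "measure (unif_sample (H*c))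
           {x\<in>space (unif_sample (H*c)). \<bar>block_endpoint j H c x - real j / real H\<bar> > \<epsilon>}
         \<le> 2 * exp (- 2 * real (H*c) * \<epsilon>\<^sup>2)"
proof (cases "j = 0 \<or> j = H")
  case True
  then have empty: "{x\<in>space (unif_sample (H*c)). \<bar>block_endpoint j H c x - real j / real H\<bar> > \<epsilon>} = {}"
    using assms(3) by (auto simp: block_endpoint_def)
  show ?thesis unfolding empty by simp
next
  case False
  let ?M = "unif_sample (H*c)" and ?y = "ord_stat (j*c) (H*c)"
  have [measurable]: "?y \<in> borel_measurable ?M"
    using False assms by (intro borel_measurable_ord_stat) auto
  have eq: "{x\<in>space ?M. \<bar>block_endpoint j H c x - real j / real H\<bar> > \<epsilon>}
      = {x\<in>space ?M. ?y x > real j / real H + \<epsilon>} \<union> {x\<in>space ?M. ?y x < real j / real H - \<epsilon>}"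
    using False by (auto simp: block_endpoint_def)
  have "measure ?M {x\<in>space ?M. \<bar>block_endpoint j H c x - real j / real H\<bar> > \<epsilon>}
      \<le> measure ?M {x\<in>space ?M. ?y x > real j / real H + \<epsilon>}
        + measure ?M {x\<in>space ?M. ?y x < real j / real H - \<epsilon>}"
    unfolding eq by (rule measure_Un_le) measurable
  also have "\<dots> \<le> exp (- 2 * real (H*c) * \<epsilon>\<^sup>2) + exp (- 2 * real (H*c) * \<epsilon>\<^sup>2)"
    using False assms by (intro add_mono ord_stat_block_upper_tail ord_stat_block_lower_tail) auto
  finally show ?thesis by simp
qed

lemma spacing_eq_block_endpoint:
  "2 \<le> H \<Longrightarrow> 1 \<le> k \<Longrightarrow> k \<le> H \<Longrightarrow>
     spacing k H c x = \<bar>block_endpoint (k - 1) H c x - block_endpoint k H c x\<bar>"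
  by (auto simp: spacing_def block_endpoint_def)

lemma abs_abs_diff_le:
  fixes u v a b e :: real
  assumes "\<bar>u - a\<bar> \<le> e" "\<bar>v - b\<bar> \<le> e" "a \<le> b"
  shows "\<bar>\<bar>u - v\<bar> - (b - a)\<bar> \<le> 2 * e"
  using assms by linarith

lemma spacing_deviation:
  assumes "2 \<le> H" "1 \<le> c" "1 \<le> k" "k \<le> H" "\<epsilon> \<ge> 0"
  shows "measure (unif_sample (H*c))
           {x\<in>space (unif_sample (H*c)). \<bar>spacing k H c x - 1 / real H\<bar> > 2 * \<epsilon>}
         \<le> 4 * exp (- 2 * real (H*c) * \<epsilon>\<^sup>2)"
proof -
  let ?M = "unif_sample (H*c)"
  interpret prob_space ?M by (rule prob_space_unif_sample)
  define D where "D j = {x\<in>space ?M. \<bar>block_endpoint j H c x - real j / real H\<bar> > \<epsilon>}" for j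
  have D_sets: "D j \<in> sets ?M" if "j \<le> H" for j
    unfolding D_def using that assms(2) by measurable
  have gap: "real k / real H - real (k - 1) / real H = 1 / real H"
    using assms by (simp add: of_nat_diff diff_divide_distrib)
  have "{x\<in>space ?M. \<bar>spacing k H c x - 1 / real H\<bar> > 2 * \<epsilon>} \<subseteq> D (k - 1) \<union> D k"
  proof
    fix x assume x: "x \<in> {x\<in>space ?M. \<bar>spacing k H c x - 1 / real H\<bar> > 2 * \<epsilon>}"
    show "x \<in> D (k - 1) \<union> D k"
    proof (rule ccontr)
      assume "x \<notin> D (k - 1) \<union> D k"
      with x have "\<bar>block_endpoint (k - 1) H c x - real (k - 1) / real H\<bar> \<le> \<epsilon>"
          and "\<bar>block_endpoint k H c x - real k / real H\<bar> \<le> \<epsilon>"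
        unfolding D_def by auto
      then have "\<bar>spacing k H c x - (real k / real H - real (k - 1) / real H)\<bar> \<le> 2 * \<epsilon>"
        unfolding spacing_eq_block_endpoint[OF assms(1,3,4)]
        by (rule abs_abs_diff_le) (simp add: divide_right_mono)
      with x show False unfolding gap by simp
    qed
  qed
  then have "measure ?M {x\<in>space ?M. \<bar>spacing k H c x - 1 / real H\<bar> > 2 * \<epsilon>} \<le> measure ?M (D (k - 1) \<union> D k)"
    using D_sets assms(4) by (intro finite_measure_mono) auto
  also have "\<dots> \<le> measure ?M (D (k - 1)) + measure ?M (D k)"
    using D_sets assms(4) by (intro measure_Un_le) auto
  also have "\<dots> \<le> 2 * exp (- 2 * real (H*c) * \<epsilon>\<^sup>2) + 2 * exp (- 2 * real (H*c) * \<epsilon>\<^sup>2)"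
    unfolding D_def using assms
    by (intro add_mono block_endpoint_deviation) auto
  finally show ?thesis by simp
qed

lemma le_exp_bound_weaken:
  fixes p C K a D \<epsilon> :: real and n :: nat
  assumes "p \<le> C * exp (- a * real n * \<epsilon>\<^sup>2)" "0 \<le> C" "C \<le> K" "0 < D"
    and "(real n + 1) / D \<le> a * real n"
  shows "p \<le> K * exp (- (real n + 1) * \<epsilon>\<^sup>2 / D)"
proof -
  have "(real n + 1) / D * \<epsilon>\<^sup>2 \<le> a * real n * \<epsilon>\<^sup>2"
    using assms(5) by (rule mult_right_mono) simp
  then have "- a * real n * \<epsilon>\<^sup>2 \<le> - (real n + 1) * \<epsilon>\<^sup>2 / D"
    using assms(4) by (simp add: field_simps)
  then have "exp (- a * real n * \<epsilon>\<^sup>2) \<le> exp (- (real n + 1) * \<epsilon>\<^sup>2 / D)"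
    by simp
  with assms(1) have "p \<le> C * exp (- (real n + 1) * \<epsilon>\<^sup>2 / D)"
    using assms(2) by (meson mult_left_mono order_trans)
  also have "\<dots> \<le> K * exp (- (real n + 1) * \<epsilon>\<^sup>2 / D)"
    using assms(3) by (rule mult_right_mono) simp
  finally show ?thesis .
qed

lemma ord_stat_upper_tail_bound:
  assumes "1 \<le> k" "k \<le> H" "1 \<le> c" "0 \<le> \<epsilon>"
  shows "measure (unif_sample (H*c))
           {x\<in>space (unif_sample (H*c)). ord_stat (k*c) (H*c) x > real k / real H + \<epsilon>}
         \<le> real H * sqrt (real (H*c) + 1) * exp (- (real (H*c) + 1) * \<epsilon>\<^sup>2 / 2)"
proof (rule le_exp_bound_weaken[where C = 1 and a = 2])
  show "1 \<le> real H * sqrt (real (H*c) + 1)"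
    using mult_mono[of 1 "real H" 1 "sqrt (real (H*c) + 1)"] assms by simp
  show "(real (H*c) + 1) / 2 \<le> 2 * real (H*c)"
    using of_nat_mono[OF mult_le_mono[OF order_trans[OF assms(1,2)] assms(3)], where 'a = real] by simp
qed (use ord_stat_block_upper_tail[OF assms] in simp_all)

lemma ord_stat_lower_tail_bound:
  assumes "1 \<le> k" "k \<le> H" "1 \<le> c" "0 \<le> \<epsilon>"
  shows "measure (unif_sample (H*c))
           {x\<in>space (unif_sample (H*c)). ord_stat (k*c) (H*c) x < real k / real H - \<epsilon>}
         \<le> real H * sqrt (real (H*c) + 1) * exp (- (real (H*c) + 1) * \<epsilon>\<^sup>2 / 8)"
proof (rule le_exp_bound_weaken[where C = 1 and a = 2])
  show "1 \<le> real H * sqrt (real (H*c) + 1)"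
    using mult_mono[of 1 "real H" 1 "sqrt (real (H*c) + 1)"] assms by simp
  show "(real (H*c) + 1) / 8 \<le> 2 * real (H*c)"
    using of_nat_mono[OF mult_le_mono[OF order_trans[OF assms(1,2)] assms(3)], where 'a = real] by simp
qed (use ord_stat_block_lower_tail[OF assms] in simp_all)

lemma spacing_tail_bound:
  assumes "2 \<le> H" "2 \<le> c" "1 \<le> k" "k \<le> H" "0 \<le> \<epsilon>"
  shows "measure (unif_sample (H*c))
           {x\<in>space (unif_sample (H*c)). \<bar>spacing k H c x - 1 / real H\<bar> > \<epsilon>}
         \<le> real H * sqrt (real (H*c) + 1) * exp (- (real (H*c) + 1) * \<epsilon>\<^sup>2 / 32)"
proof (rule le_exp_bound_weaken[where C = 4 and a = "1/2"])
  have "4 \<le> real (H*c)"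
    using of_nat_mono[OF mult_le_mono[OF assms(1,2)], where 'a = real] by simp
  then have "2 \<le> sqrt (real (H*c) + 1)"
    by (simp add: real_le_rsqrt)
  then show "4 \<le> real H * sqrt (real (H*c) + 1)"
    using mult_mono[of 2 "real H" 2 "sqrt (real (H*c) + 1)"] assms(1) by simp
  show "(real (H*c) + 1) / 32 \<le> 1/2 * real (H*c)"
    using \<open>4 \<le> real (H*c)\<close> by simp
  show "measure (unif_sample (H*c))
          {x\<in>space (unif_sample (H*c)). \<bar>spacing k H c x - 1 / real H\<bar> > \<epsilon>}
        \<le> 4 * exp (- (1/2) * real (H*c) * \<epsilon>\<^sup>2)"
    using spacing_deviation[of H c k "\<epsilon> / 2"] assms by (simp add: power_divide mult.assoc)
qed simp_all

theorem lemma20: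
  shows
  "(\<exists>C>0. \<exists>N. \<forall>H c k. \<forall>\<epsilon>::real. H \<ge> N \<longrightarrow> c \<ge> N \<longrightarrow> 1 \<le> k \<longrightarrow> k \<le> H - 1 \<longrightarrow>
       \<epsilon> > 1 / (real (H*c) - 1) \<longrightarrow>
       measure (unif_sample (H*c))
         {x \<in> space (unif_sample (H*c)). ord_stat (k*c) (H*c) x > real k / real H + \<epsilon>}
       \<le> C * real H * sqrt (real (H*c) + 1) * exp (- (real (H*c) + 1) * \<epsilon>\<^sup>2 / 2))
   \<and> (\<exists>C>0. \<exists>N. \<forall>H c k. \<forall>\<epsilon>::real. H \<ge> N \<longrightarrow> c \<ge> N \<longrightarrow> 1 \<le> k \<longrightarrow> k \<le> H - 1 \<longrightarrow>
       \<epsilon> > 2 / (real (H*c) - 1) \<longrightarrow>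
       measure (unif_sample (H*c))
         {x \<in> space (unif_sample (H*c)). ord_stat (k*c) (H*c) x < real k / real H - \<epsilon>}
       \<le> C * real H * sqrt (real (H*c) + 1) * exp (- (real (H*c) + 1) * \<epsilon>\<^sup>2 / 8))
   \<and> (\<exists>C>0. \<exists>N. \<forall>H c k. \<forall>\<epsilon>::real. H \<ge> N \<longrightarrow> c \<ge> N \<longrightarrow> 1 \<le> k \<longrightarrow> k \<le> H \<longrightarrow>
       \<epsilon> > 4 / (real (H*c) - 1) \<longrightarrow>
       measure (unif_sample (H*c))
         {x \<in> space (unif_sample (H*c)). \<bar>spacing k H c x - 1 / real H\<bar> > \<epsilon>}
       \<le> C * real H * sqrt (real (H*c) + 1) * exp (- (real (H*c) + 1) * \<epsilon>\<^sup>2 / 32))"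
proof -
  have eps_pos: "0 < \<epsilon>" if "2 \<le> H" "2 \<le> c" "0 < a" "a / (real (H*c) - 1) < \<epsilon>"
    for H c :: nat and a \<epsilon> :: real
  proof -
    have "2 * 2 \<le> real (H*c)"
      using of_nat_mono[OF mult_le_mono[OF that(1,2)], where 'a = real] by simp
    then have "0 < a / (real (H*c) - 1)" using that(3) by simp
    with that(4) show ?thesis by linarith
  qed
  show ?thesis
  proof (intro conjI exI[of _ "1::real"] exI[of _ "2::nat"] allI impI zero_less_one, unfold mult_1, goal_cases)
    case (1 H c k \<epsilon>)
    then have "0 < \<epsilon>" by (intro eps_pos[of H c 1 \<epsilon>]) auto
    with 1 show ?case by (intro ord_stat_upper_tail_bound) auto
  next
    case (2 H c k \<epsilon>)
    then have "0 < \<epsilon>" by (intro eps_pos[of H c 2 \<epsilon>]) auto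
    with 2 show ?case by (intro ord_stat_lower_tail_bound) auto
  next
    case (3 H c k \<epsilon>)
    then have "0 < \<epsilon>" by (intro eps_pos[of H c 4 \<epsilon>]) auto
    with 3 show ?case by (intro spacing_tail_bound) auto
  qed
qed

end
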